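(* Let $\mathcal M=(M,<,+,0,\ldots)$ be a definably complete locally o-minimal expansion of an ordered abelian group. Let $C$ be a definable set, $s>0$, and let $\{f_t:C\to M\}_{0<t<s}$ be a definable family of pointwise bounded functions. Then the family is pointwise convergent.
   Context: Definable = with parameters; definably complete and locally o-minimal as standard. A definable family $\{f_t\}_{0<t<s}$ is given by a definable $F:C\times(0,s)\to M$ with $f_t(x)=F(x,t)$. It is pointwise bounded if for every $x\in C$ there is $N>0$ with $|f_t(x)|<N$ for all $t\in(0,s)$. It is pointwise convergent if for every $\varepsilon>0$ and $x\in C$ there is $s'>0$ such that $|f_t(x)-f_{t'}(x)|<\varepsilon$ for all $t,t'\in(0,s')$. *)

theory Defs
  imports Main
begin

text \<open>Definable sets (with parameters) of an expansion of an ordered abelian group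
  (M,<,+,0,...), presented as a "structure on M" in the sense of van den Dries:
  S n is the collection of definable subsets of M^n (tuples as lists of length n).
  Any expansion yields such an S, and any such S is the collection of definable
  sets of the expansion of (M,<,+) by all members of S.\<close>

definition definable_structure ::
  "(nat \<Rightarrow> ('a::linordered_ab_group_add) list set set) \<Rightarrow> bool" where
  "definable_structure S \<longleftrightarrow>
     (\<forall>n. \<forall>A\<in>S n. A \<subseteq> {xs. length xs = n}) \<and>
     (\<forall>n. {} \<in> S n) \<and>
     (\<forall>n. \<forall>A\<in>S n. \<forall>B\<in>S n. A \<union> B \<in> S n) \<and>
     (\<forall>n. \<forall>A\<in>S n. {xs. length xs = n} - A \<in> S n) \<and>
     (\<forall>n. \<forall>A\<in>S n. {xs @ [y] | xs y. xs \<in> A} \<in> S (Suc n)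
                   \<and> {y # xs | xs y. xs \<in> A} \<in> S (Suc n)) \<and>
     (\<forall>n i j. i < n \<and> j < n \<longrightarrow> {xs. length xs = n \<and> xs ! i = xs ! j} \<in> S n) \<and>
     (\<forall>n. \<forall>A\<in>S (Suc n). butlast ` A \<in> S n) \<and>
     (\<forall>a. {[a]} \<in> S 1) \<and>
     {[x, y] | x y. x < y} \<in> S 2 \<and>
     {[x, y, x + y] | x y. True} \<in> S 3"

definition definably_complete ::
  "(nat \<Rightarrow> ('a::linordered_ab_group_add) list set set) \<Rightarrow> bool" where
  "definably_complete S \<longleftrightarrow>
     (\<forall>A\<in>S 1. let X = {x. [x] \<in> A} in
        X \<noteq> {} \<and> (\<exists>b. \<forall>x\<in>X. x \<le> b) \<longrightarrow>
        (\<exists>b. (\<forall>x\<in>X. x \<le> b) \<and> (\<forall>c. (\<forall>x\<in>X. x \<le> c) \<longrightarrow> b \<le> c)))"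

definition finite_union_points_intervals :: "('a::linorder) set \<Rightarrow> bool" where
  "finite_union_points_intervals Y \<longleftrightarrow>
     (\<exists>P Q. finite P \<and> finite Q \<and> Y = P \<union> (\<Union>(c, d)\<in>Q. {c<..<d}))"

definition locally_o_minimal ::
  "(nat \<Rightarrow> ('a::linordered_ab_group_add) list set set) \<Rightarrow> bool" where
  "locally_o_minimal S \<longleftrightarrow>
     (\<forall>A\<in>S 1. \<forall>a. \<exists>c d. c < a \<and> a < d \<and>
        finite_union_points_intervals ({x. [x] \<in> A} \<inter> {c<..<d}))"

end

theory Submission
  imports Defs
begin

text \<open>Fix \<open>x\<close> and write \<open>f t = F x t\<close>. The eventual lower bounds of \<open>f\<close> at \<open>0\<^sup>+\<close> form a
  definable, nonempty and bounded set, so by definable completeness they have a supremum \<open>l\<close>,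
  the lim inf of \<open>f\<close>. Given \<open>d > 0\<close>, eventually \<open>f > l - d\<close> by the choice of \<open>l\<close>. By local
  o-minimality at \<open>0\<close>, the definable set \<open>{t. f t > l + d}\<close> either contains or misses an
  interval \<open>(0, b)\<close>; containing it would make \<open>l + d\<close> an eventual lower bound, so eventually
  \<open>f \<le> l + d\<close>. Thus \<open>f\<close> oscillates by less than \<open>2 d\<close> near \<open>0\<close>. If instead the order is
  discrete at \<open>0\<close>, the condition on \<open>t, t'\<close> is vacuous for small \<open>s'\<close>.\<close>

lemma abs_less_iff_abs_if:
  fixes a b :: "'a::{linordered_ab_group_add,abs_if}"
  shows "\<bar>a\<bar> < b \<longleftrightarrow> a < b \<and> - a < b"
proof (cases "a < 0")
  case True
  then have "a < - a" by (meson neg_0_less_iff_less order_less_trans)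
  with True show ?thesis using order_less_trans[of a "- a" b] by (auto simp: abs_if)
next
  case False
  then have "- a \<le> a" by (simp add: not_less)
  with False show ?thesis using order_le_less_trans[of "- a" a b] by (auto simp: abs_if)
qed

lemma diff_less_of_mem_interval:
  fixes a d e u v :: "'a::linordered_ab_group_add"
  assumes "u \<le> a + d" "a - d < v" and "d + d \<le> e"
  shows "u - v < e"
proof -
  have "u - v < (a + d) - (a - d)"
    using assms(1,2) by (meson diff_right_mono diff_strict_left_mono order_le_less_trans)
  also have "\<dots> = d + d" by (simp add: algebra_simps)
  finally show ?thesis using assms(3) by simp
qed

lemma exists_double_le:
  fixes e :: "'a::linordered_ab_group_add"
  assumes dense: "\<And>z::'a. 0 < z \<Longrightarrow> \<exists>r. 0 < r \<and> r < z" and "0 < e"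
  obtains d where "0 < d" "d + d \<le> e"
proof -
  obtain r where r: "0 < r" "r < e" using dense[OF \<open>0 < e\<close>] by blast
  have "min r (e - r) + min r (e - r) \<le> r + (e - r)" by (intro add_mono) auto
  then show thesis using r by (intro that[of "min r (e - r)"]) simp_all
qed

lemma lub_approx:
  fixes l :: "'a::linordered_ab_group_add"
  assumes "\<And>c. (\<forall>x\<in>A. x \<le> c) \<Longrightarrow> l \<le> c" and "0 < d"
  obtains x where "x \<in> A" "l - d < x"
  using assms by (metis diff_less_eq less_add_same_cancel1 not_le)

lemma finite_union_points_intervals_right_of:
  fixes Y :: "'a::linorder set"
  assumes "c < a" "a < d" and "finite_union_points_intervals (Y \<inter> {c<..<d})"
  obtains b where "a < b" "{a<..<b} \<subseteq> Y \<or> {a<..<b} \<inter> Y = {}"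
proof -
  obtain P Q where PQ: "finite P" "finite Q" "Y \<inter> {c<..<d} = P \<union> (\<Union>(x, y)\<in>Q. {x<..<y})"
    using assms(3) unfolding finite_union_points_intervals_def by blast
  define E where "E = insert d ({p\<in>P. a < p} \<union> {x\<in>fst ` Q. a < x} \<union> {y\<in>snd ` Q. a < y})"
  define b where "b = Min E"
  have "finite E" using PQ unfolding E_def by auto
  then have "a < b" and below_E: "\<And>z. z \<in> E \<Longrightarrow> b \<le> z"
    using assms(2) by (auto simp: b_def E_def Min_gr_iff)
  \<comment> \<open>Below the first point of \<open>E\<close> to the right of \<open>a\<close>, membership in \<open>Y\<close> no longer depends on \<open>t\<close>.\<close>
  have in_Y: "t \<in> Y \<longleftrightarrow> (\<exists>(x, y)\<in>Q. x \<le> a \<and> b \<le> y)" if t: "a < t" "t < b" for t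
  proof -
    have "t < d" using t below_E[of d] by (auto simp: E_def)
    then have "t \<in> Y \<longleftrightarrow> t \<in> P \<union> (\<Union>(x, y)\<in>Q. {x<..<y})"
      using t assms(1) PQ(3) by (metis Int_iff greaterThanLessThan_iff order_less_trans)
    also have "\<dots> \<longleftrightarrow> (\<exists>(x, y)\<in>Q. x \<le> a \<and> b \<le> y)"
    proof
      assume "t \<in> P \<union> (\<Union>(x, y)\<in>Q. {x<..<y})"
      moreover have "t \<notin> P" using t below_E[of t] by (auto simp: E_def)
      ultimately obtain x y where xy: "(x, y) \<in> Q" "x < t" "t < y" by auto
      have "\<not> a < x" using xy t below_E[of x] by (force simp: E_def)
      moreover have "b \<le> y" using xy t below_E[of y] by (force simp: E_def)
      ultimately show "\<exists>(x, y)\<in>Q. x \<le> a \<and> b \<le> y" using xy by (auto simp: not_less)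
    next
      assume "\<exists>(x, y)\<in>Q. x \<le> a \<and> b \<le> y"
      then show "t \<in> P \<union> (\<Union>(x, y)\<in>Q. {x<..<y})" using t by force
    qed
    finally show ?thesis .
  qed
  show thesis
    using in_Y \<open>a < b\<close> by (intro that[of b]) auto
qed

definition eventual_lower_bounds :: "('a::linordered_ab_group_add \<Rightarrow> 'a) \<Rightarrow> 'a \<Rightarrow> 'a set" where
  "eventual_lower_bounds f s = {c. \<exists>e>0. \<forall>t. 0 < t \<and> t < e \<and> t < s \<longrightarrow> c < f t}"

lemma mem_eventual_lower_bounds_of_lower_bound:
  assumes "0 < s" and "\<And>t. 0 < t \<Longrightarrow> t < s \<Longrightarrow> L < f t"
  shows "L \<in> eventual_lower_bounds f s"
  using assms unfolding eventual_lower_bounds_def by auto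

lemma eventual_lower_bound_le:
  fixes f :: "'a::linordered_ab_group_add \<Rightarrow> 'a"
  assumes dense: "\<And>z::'a. 0 < z \<Longrightarrow> \<exists>r. 0 < r \<and> r < z" and "0 < s"
    and upper: "\<And>t. 0 < t \<Longrightarrow> t < s \<Longrightarrow> f t < U" and "c \<in> eventual_lower_bounds f s"
  shows "c \<le> U"
proof -
  obtain e where "0 < e" and e: "\<And>t. 0 < t \<Longrightarrow> t < e \<Longrightarrow> t < s \<Longrightarrow> c < f t"
    using assms(4) unfolding eventual_lower_bounds_def by blast
  obtain r where "0 < r" "r < min e s" using dense \<open>0 < e\<close> \<open>0 < s\<close> by (metis min_less_iff_conj)
  then show "c \<le> U" using e[of r] upper[of r] by (auto intro: less_imp_le order_less_trans)
qed

locale definable_sets =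
  fixes S :: "nat \<Rightarrow> ('a::linordered_ab_group_add) list set set"
  assumes definable_structure: "definable_structure S"
begin

definition definable :: "nat \<Rightarrow> ('a list \<Rightarrow> bool) \<Rightarrow> bool" where
  "definable m P \<longleftrightarrow> {ys. length ys = m \<and> P ys} \<in> S m"

lemma
  shows S_length: "A \<in> S n \<Longrightarrow> A \<subseteq> {xs. length xs = n}"
    and S_empty: "{} \<in> S n"
    and S_Un: "A \<in> S n \<Longrightarrow> B \<in> S n \<Longrightarrow> A \<union> B \<in> S n"
    and S_Compl: "A \<in> S n \<Longrightarrow> {xs. length xs = n} - A \<in> S n"
    and S_Cons: "A \<in> S n \<Longrightarrow> {y # xs | xs y. xs \<in> A} \<in> S (Suc n)"
    and S_diagonal: "i < n \<Longrightarrow> j < n \<Longrightarrow> {xs. length xs = n \<and> xs ! i = xs ! j} \<in> S n"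
    and S_butlast: "A \<in> S (Suc n) \<Longrightarrow> butlast ` A \<in> S n"
    and S_point: "{[a]} \<in> S 1"
    and S_less: "{[x, y] | x y. x < y} \<in> S 2"
  using definable_structure unfolding definable_structure_def by simp_all

lemma definableI: "A \<in> S m \<Longrightarrow> A = {ys. length ys = m \<and> P ys} \<Longrightarrow> definable m P"
  by (simp add: definable_def)

lemma definable_mem: "A \<in> S m \<Longrightarrow> definable m (\<lambda>ys. ys \<in> A)"
  using S_length[of A m] by (intro definableI[of A]) auto

lemma definable_cong:
  assumes "definable m P" and "\<And>ys. length ys = m \<Longrightarrow> P ys = Q ys"
  shows "definable m Q"
proof -
  have "{ys. length ys = m \<and> P ys} = {ys. length ys = m \<and> Q ys}" using assms(2) by blast
  with assms(1) show ?thesis by (simp add: definable_def)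
qed

lemma definable_Not:
  assumes "definable m P"
  shows "definable m (\<lambda>ys. \<not> P ys)"
proof (rule definableI)
  show "{xs. length xs = m} - {ys. length ys = m \<and> P ys} \<in> S m"
    using assms unfolding definable_def by (rule S_Compl)
qed auto

lemma definable_True: "definable m (\<lambda>_. True)"
proof (rule definableI)
  show "{xs. length xs = m} - {} \<in> S m" by (rule S_Compl[OF S_empty])
qed auto

lemma definable_disj:
  assumes "definable m P" and "definable m Q"
  shows "definable m (\<lambda>ys. P ys \<or> Q ys)"
proof (rule definableI)
  show "{ys. length ys = m \<and> P ys} \<union> {ys. length ys = m \<and> Q ys} \<in> S m"
    using assms unfolding definable_def by (rule S_Un)
qed auto

lemma definable_conj:
  assumes "definable m P" and "definable m Q"
  shows "definable m (\<lambda>ys. P ys \<and> Q ys)"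
proof -
  have "definable m (\<lambda>ys. \<not> (\<not> P ys \<or> \<not> Q ys))"
    using assms by (intro definable_Not definable_disj)
  then show ?thesis by simp
qed

lemma definable_ex_last:
  assumes "definable (Suc m) P"
  shows "definable m (\<lambda>ys. \<exists>y. P (ys @ [y]))"
proof (rule definableI)
  show "butlast ` {ys. length ys = Suc m \<and> P ys} \<in> S m"
    using assms unfolding definable_def by (rule S_butlast)
  show "butlast ` {ys. length ys = Suc m \<and> P ys} = {ys. length ys = m \<and> (\<exists>y. P (ys @ [y]))}"
  proof (intro set_eqI iffI)
    fix zs assume "zs \<in> butlast ` {ys. length ys = Suc m \<and> P ys}"
    then obtain ws where ws: "length ws = Suc m" "P ws" "zs = butlast ws" by auto
    then have "ws = butlast ws @ [last ws]" by (metis append_butlast_last_id list.size(3) nat.simps(3))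
    with ws show "zs \<in> {ys. length ys = m \<and> (\<exists>y. P (ys @ [y]))}" by (auto, metis)
  next
    fix zs assume "zs \<in> {ys. length ys = m \<and> (\<exists>y. P (ys @ [y]))}"
    then obtain y where "length zs = m" "P (zs @ [y])" by auto
    then show "zs \<in> butlast ` {ys. length ys = Suc m \<and> P ys}"
      by (intro image_eqI[where x = "zs @ [y]"]) auto
  qed
qed

lemma definable_by_projection:
  assumes "definable k P" and "k = Suc m" and "\<And>ys. length ys = m \<Longrightarrow> (\<exists>y. P (ys @ [y])) \<longleftrightarrow> Q ys"
  shows "definable m Q"
  using definable_ex_last[of m P] assms by (auto elim!: definable_cong)

lemma definable_ex_suffix:
  "definable (m + j) P \<Longrightarrow> definable m (\<lambda>ys. \<exists>zs. length zs = j \<and> P (ys @ zs))"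
proof (induction j arbitrary: P)
  case 0
  then show ?case by simp
next
  case (Suc j)
  have "definable (m + j) (\<lambda>ys. \<exists>y. P (ys @ [y]))"
    using Suc.prems by (intro definable_ex_last) simp
  from Suc.IH[OF this] show ?case
  proof (rule definable_cong)
    fix ys :: "'a list"
    show "(\<exists>zs. length zs = j \<and> (\<exists>y. P ((ys @ zs) @ [y]))) \<longleftrightarrow>
          (\<exists>zs. length zs = Suc j \<and> P (ys @ zs))"
    proof
      assume "\<exists>zs. length zs = j \<and> (\<exists>y. P ((ys @ zs) @ [y]))"
      then obtain zs y where "length zs = j" "P (ys @ zs @ [y])" by auto
      then show "\<exists>zs. length zs = Suc j \<and> P (ys @ zs)" by (intro exI[of _ "zs @ [y]"]) auto
    next
      assume "\<exists>zs. length zs = Suc j \<and> P (ys @ zs)"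
      then obtain zs where zs: "length zs = Suc j" "P (ys @ zs)" by blast
      then obtain us u where "zs = us @ [u]" by (metis append_butlast_last_id list.size(3) nat.simps(3))
      with zs show "\<exists>zs. length zs = j \<and> (\<exists>y. P ((ys @ zs) @ [y]))" by auto
    qed
  qed
qed

lemma definable_drop: "definable m P \<Longrightarrow> definable (j + m) (\<lambda>ys. P (drop j ys))"
proof (induction j)
  case 0
  then show ?case by simp
next
  case (Suc j)
  then have "{y # xs | xs y. xs \<in> {ys. length ys = j + m \<and> P (drop j ys)}} \<in> S (Suc (j + m))"
    unfolding definable_def by (intro S_Cons) simp
  then have "definable (Suc (j + m)) (\<lambda>ys. P (drop (Suc j) ys))"
  proof (rule definableI)
    show "{y # xs | xs y. xs \<in> {ys. length ys = j + m \<and> P (drop j ys)}} =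
          {ys. length ys = Suc (j + m) \<and> P (drop (Suc j) ys)}"
      by (auto simp: length_Suc_conv)
  qed
  then show ?case by simp
qed

lemma definable_nth_eq_nth: "i < m \<Longrightarrow> j < m \<Longrightarrow> definable m (\<lambda>ys. ys ! i = ys ! j)"
  by (rule definableI[OF S_diagonal]) auto

lemma definable_all_less:
  "(\<And>i. i < (k::nat) \<Longrightarrow> definable m (Q i)) \<Longrightarrow> definable m (\<lambda>ys. \<forall>i<k. Q i ys)"
proof (induction k)
  case 0
  show ?case by (rule definable_cong[OF definable_True]) auto
next
  case (Suc k)
  then have "definable m (\<lambda>ys. (\<forall>i<k. Q i ys) \<and> Q k ys)" by (intro definable_conj) auto
  then show ?case by (rule definable_cong) (auto simp: less_Suc_eq)
qed

lemma definable_reindex: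
  assumes P: "definable k P" and \<sigma>: "\<And>i. i < k \<Longrightarrow> \<sigma> i < m"
  shows "definable m (\<lambda>ys. P (map (\<lambda>i. ys ! \<sigma> i) [0..<k]))"
proof -
  \<comment> \<open>Adjoin \<open>k\<close> new coordinates, equate the \<open>i\<close>-th of them with coordinate \<open>\<sigma> i\<close>, and project them away.\<close>
  have "definable (m + k) (\<lambda>ws. P (drop m ws))"
    using definable_drop[OF P, of m] by (simp add: add.commute)
  then have "definable (m + k) (\<lambda>ws. P (drop m ws) \<and> (\<forall>i<k. ws ! (m + i) = ws ! \<sigma> i))"
    using \<sigma> by (intro definable_conj definable_all_less definable_nth_eq_nth) (simp_all add: trans_less_add1)
  from definable_ex_suffix[OF this] show ?thesis
  proof (rule definable_cong)
    fix ys :: "'a list" assume ys: "length ys = m"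
    show "(\<exists>zs. length zs = k \<and> P (drop m (ys @ zs)) \<and> (\<forall>i<k. (ys @ zs) ! (m + i) = (ys @ zs) ! \<sigma> i))
       \<longleftrightarrow> P (map (\<lambda>i. ys ! \<sigma> i) [0..<k])"
    proof
      assume "\<exists>zs. length zs = k \<and> P (drop m (ys @ zs)) \<and> (\<forall>i<k. (ys @ zs) ! (m + i) = (ys @ zs) ! \<sigma> i)"
      then obtain zs where zs: "length zs = k" "P (drop m (ys @ zs))"
        "\<forall>i<k. (ys @ zs) ! (m + i) = (ys @ zs) ! \<sigma> i" by blast
      have "zs = map (\<lambda>i. ys ! \<sigma> i) [0..<k]"
        using zs ys \<sigma> by (intro nth_equalityI) (auto simp: nth_append)
      with zs ys show "P (map (\<lambda>i. ys ! \<sigma> i) [0..<k])" by simp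
    next
      assume "P (map (\<lambda>i. ys ! \<sigma> i) [0..<k])"
      then show "\<exists>zs. length zs = k \<and> P (drop m (ys @ zs)) \<and> (\<forall>i<k. (ys @ zs) ! (m + i) = (ys @ zs) ! \<sigma> i)"
        using ys \<sigma> by (intro exI[of _ "map (\<lambda>i. ys ! \<sigma> i) [0..<k]"]) (auto simp: nth_append)
    qed
  qed
qed

lemma definable_nth_less_nth:
  assumes "i < m" and "j < m"
  shows "definable m (\<lambda>ys. ys ! i < ys ! j)"
proof -
  have "definable 2 (\<lambda>ys. ys ! 0 < ys ! 1)"
    by (rule definableI[OF S_less]) (auto simp: numeral_2_eq_2 length_Suc_conv)
  from definable_reindex[OF this, of "\<lambda>l. if l = 0 then i else j" m] show ?thesis
    using assms by (auto simp: numeral_2_eq_2 elim!: definable_cong)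
qed

lemma definable_nth_eq_const:
  assumes "i < m"
  shows "definable m (\<lambda>ys. ys ! i = a)"
proof -
  have "definable 1 (\<lambda>ys. ys ! 0 = a)"
    by (rule definableI[OF S_point]) (auto simp: length_Suc_conv)
  from definable_reindex[OF this, of "\<lambda>_. i" m] show ?thesis
    using assms by (auto elim!: definable_cong)
qed

lemma definable_const_less_nth:
  assumes "i < m" shows "definable m (\<lambda>ys. a < ys ! i)"
proof -
  have "definable (Suc m) (\<lambda>ys. ys ! m = a \<and> ys ! m < ys ! i)"
    using assms by (intro definable_conj definable_nth_eq_const definable_nth_less_nth) auto
  from definable_ex_last[OF this] show ?thesis
    by (rule definable_cong) (auto simp: nth_append assms)
qed

lemma definable_fix_suffix:
  assumes P: "definable (m + j) P" and x: "length x = j"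
  shows "definable m (\<lambda>ys. P (ys @ x))"
proof -
  have "definable (m + j) (\<lambda>ws. P ws \<and> (\<forall>i<j. ws ! (m + i) = x ! i))"
    by (intro definable_conj P definable_all_less definable_nth_eq_const) auto
  from definable_ex_suffix[OF this] show ?thesis
  proof (rule definable_cong)
    fix ys :: "'a list" assume ys: "length ys = m"
    have "zs = x" if "length zs = j" "\<forall>i<j. (ys @ zs) ! (m + i) = x ! i" for zs
      using that ys x by (intro nth_equalityI) (auto simp: nth_append)
    then show "(\<exists>zs. length zs = j \<and> P (ys @ zs) \<and> (\<forall>i<j. (ys @ zs) ! (m + i) = x ! i)) \<longleftrightarrow> P (ys @ x)"
      using ys x by (auto simp: nth_append)
  qed
qed

lemma definable_fix_prefix:
  assumes P: "definable (j + m) P" and x: "length x = j"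
  shows "definable m (\<lambda>ys. P (x @ ys))"
proof -
  define \<sigma> where "\<sigma> l = (if l < j then m + l else l - j)" for l
  have "definable (m + j) (\<lambda>ws. P (map (\<lambda>l. ws ! \<sigma> l) [0..<j + m]))"
    using P by (rule definable_reindex) (auto simp: \<sigma>_def)
  from definable_fix_suffix[OF this x] show ?thesis
  proof (rule definable_cong)
    fix ys :: "'a list" assume ys: "length ys = m"
    have "map (\<lambda>l. (ys @ x) ! \<sigma> l) [0..<j + m] = x @ ys"
      using ys x by (intro nth_equalityI) (auto simp: \<sigma>_def nth_append)
    then show "P (map (\<lambda>l. (ys @ x) ! \<sigma> l) [0..<j + m]) \<longleftrightarrow> P (x @ ys)" by simp
  qed
qed


lemma definable_graph_fibre:
  assumes C: "C \<in> S n" and graph: "{xs @ [t, F xs t] | xs t. xs \<in> C \<and> 0 < t \<and> t < s} \<in> S (n + 2)"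
    and x: "x \<in> C"
  shows "definable 2 (\<lambda>w. 0 < w ! 0 \<and> w ! 0 < s \<and> w ! 1 = F x (w ! 0))"
proof -
  have lengths: "length xs = n" if "xs \<in> C" for xs using S_length[OF C] that by blast
  have "definable 2 (\<lambda>w. x @ w \<in> {xs @ [t, F xs t] | xs t. xs \<in> C \<and> 0 < t \<and> t < s})"
    using definable_mem[OF graph] lengths[OF x] by (rule definable_fix_prefix)
  then show ?thesis
  proof (rule definable_cong)
    fix w :: "'a list" assume "length w = 2"
    then obtain a b where w: "w = [a, b]" by (auto simp: numeral_2_eq_2 length_Suc_conv)
    have "x @ [a, b] = xs @ [t, F xs t] \<longleftrightarrow> xs = x \<and> a = t \<and> b = F x t" if "xs \<in> C" for xs t
      using lengths[OF x] lengths[OF that] by auto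
    then show "x @ w \<in> {xs @ [t, F xs t] | xs t. xs \<in> C \<and> 0 < t \<and> t < s} \<longleftrightarrow>
               0 < w ! 0 \<and> w ! 0 < s \<and> w ! 1 = F x (w ! 0)"
      using w x by auto
  qed
qed

lemma definable_superlevel_set:
  assumes graph: "definable 2 (\<lambda>w. 0 < w ! 0 \<and> w ! 0 < s \<and> w ! 1 = f (w ! 0))"
  shows "definable 1 (\<lambda>w. w ! 0 \<in> {t. 0 < t \<and> t < s \<and> c < f t})"
proof -
  have "definable 2 (\<lambda>w. (0 < w ! 0 \<and> w ! 0 < s \<and> w ! 1 = f (w ! 0)) \<and> c < w ! 1)"
    by (intro definable_conj graph definable_const_less_nth) auto
  then show ?thesis by (rule definable_by_projection) (auto simp: nth_append)
qed

lemma definable_eventual_lower_bounds: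
  assumes graph: "definable 2 (\<lambda>w. 0 < w ! 0 \<and> w ! 0 < s \<and> w ! 1 = f (w ! 0))"
  shows "definable 1 (\<lambda>w. w ! 0 \<in> eventual_lower_bounds f s)"
proof -
  \<comment> \<open>Coordinates \<open>[c, e, t, y]\<close> with \<open>y = f t\<close>; quantify away \<open>y\<close>, \<open>t\<close> and \<open>e\<close>.\<close>
  have "definable 4 (\<lambda>w. 0 < w ! 2 \<and> w ! 2 < s \<and> w ! 3 = f (w ! 2))"
    using definable_reindex[OF graph, of "\<lambda>l. if l = 0 then 2 else 3" 4] by (rule definable_cong) auto
  then have "definable 4 (\<lambda>w. (0 < w ! 2 \<and> w ! 2 < s \<and> w ! 3 = f (w ! 2)) \<and> w ! 2 < w ! 1 \<and> \<not> w ! 0 < w ! 3)"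
    by (rule definable_conj[OF _ definable_conj[OF definable_nth_less_nth definable_Not[OF definable_nth_less_nth]]])
      simp_all
  then have "definable 3 (\<lambda>w. 0 < w ! 2 \<and> w ! 2 < s \<and> w ! 2 < w ! 1 \<and> \<not> w ! 0 < f (w ! 2))"
    by (rule definable_by_projection) (auto simp: nth_append)
  then have "definable 2 (\<lambda>w. \<exists>t. 0 < t \<and> t < s \<and> t < w ! 1 \<and> \<not> w ! 0 < f t)"
    by (rule definable_by_projection) (auto simp: nth_append)
  then have "definable 2 (\<lambda>w. 0 < w ! 1 \<and> \<not> (\<exists>t. 0 < t \<and> t < s \<and> t < w ! 1 \<and> \<not> w ! 0 < f t))"
    by (intro definable_conj definable_Not definable_const_less_nth) auto
  then show ?thesis
    by (rule definable_by_projection) (auto simp: nth_append eventual_lower_bounds_def)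
qed

end

locale definably_complete_locally_o_minimal = definable_sets +
  assumes definably_complete: "definably_complete S"
    and locally_o_minimal: "locally_o_minimal S"
begin

lemma definable_least_upper_bound:
  assumes "definable 1 (\<lambda>w. w ! 0 \<in> A)" and "a \<in> A" and "\<And>x. x \<in> A \<Longrightarrow> x \<le> b"
  shows "\<exists>l. (\<forall>x\<in>A. x \<le> l) \<and> (\<forall>c. (\<forall>x\<in>A. x \<le> c) \<longrightarrow> l \<le> c)"
proof -
  let ?D = "{ys. length ys = 1 \<and> ys ! 0 \<in> A}"
  have "?D \<in> S 1" using assms(1) by (simp add: definable_def)
  from bspec[OF definably_complete[unfolded definably_complete_def] this]
  have "A \<noteq> {} \<and> (\<exists>b. \<forall>x\<in>A. x \<le> b) \<longrightarrow> (\<exists>l. (\<forall>x\<in>A. x \<le> l) \<and> (\<forall>c. (\<forall>x\<in>A. x \<le> c) \<longrightarrow> l \<le> c))"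
    by (simp add: Let_def)
  then show ?thesis using assms(2,3) by blast
qed

lemma definable_in_or_out_right_of:
  assumes "definable 1 (\<lambda>w. w ! 0 \<in> Y)"
  obtains b where "a < b" "{a<..<b} \<subseteq> Y \<or> {a<..<b} \<inter> Y = {}"
proof -
  let ?D = "{ys. length ys = 1 \<and> ys ! 0 \<in> Y}"
  have "?D \<in> S 1" using assms by (simp add: definable_def)
  from bspec[OF locally_o_minimal[unfolded locally_o_minimal_def] this]
  obtain c d where "c < a" "a < d" "finite_union_points_intervals (Y \<inter> {c<..<d})"
    by (simp (no_asm_use)) blast
  then show thesis using that finite_union_points_intervals_right_of by blast
qed

lemma eventually_le_of_not_eventual_lower_bound:
  assumes graph: "definable 2 (\<lambda>w. 0 < w ! 0 \<and> w ! 0 < s \<and> w ! 1 = f (w ! 0))"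
    and "c \<notin> eventual_lower_bounds f s"
  obtains e where "0 < e" "\<And>t. 0 < t \<Longrightarrow> t < e \<Longrightarrow> t < s \<Longrightarrow> f t \<le> c"
proof -
  obtain b where "0 < b" and in_or_out:
    "{0<..<b} \<subseteq> {t. 0 < t \<and> t < s \<and> c < f t} \<or> {0<..<b} \<inter> {t. 0 < t \<and> t < s \<and> c < f t} = {}"
    using definable_in_or_out_right_of[OF definable_superlevel_set[OF graph]] by blast
  have "\<not> {0<..<b} \<subseteq> {t. 0 < t \<and> t < s \<and> c < f t}"
  proof
    assume "{0<..<b} \<subseteq> {t. 0 < t \<and> t < s \<and> c < f t}"
    then have "c \<in> eventual_lower_bounds f s"
      unfolding eventual_lower_bounds_def using \<open>0 < b\<close>
      by (intro CollectI exI[of _ b]) (auto simp: subset_iff)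
    with assms(2) show False by contradiction
  qed
  with in_or_out have disjoint: "{0<..<b} \<inter> {t. 0 < t \<and> t < s \<and> c < f t} = {}" by blast
  show thesis
  proof (rule that[OF \<open>0 < b\<close>])
    fix t assume "0 < t" "t < b" "t < s"
    moreover have "t \<notin> {0<..<b} \<inter> {t. 0 < t \<and> t < s \<and> c < f t}" using disjoint by simp
    ultimately show "f t \<le> c" by (simp add: not_less)
  qed
qed

theorem bounded_definable_function_Cauchy_at_0:
  assumes graph: "definable 2 (\<lambda>w. 0 < w ! 0 \<and> w ! 0 < s \<and> w ! 1 = f (w ! 0))"
    and dense: "\<And>z::'a. 0 < z \<Longrightarrow> \<exists>r. 0 < r \<and> r < z"
    and "0 < s" and bounded: "\<And>t. 0 < t \<Longrightarrow> t < s \<Longrightarrow> f t \<in> {L<..<U}"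
    and "0 < \<epsilon>"
  obtains s' where "0 < s'" "s' \<le> s" "\<And>t t'. 0 < t \<Longrightarrow> t < s' \<Longrightarrow> 0 < t' \<Longrightarrow> t' < s' \<Longrightarrow> f t - f t' < \<epsilon>"
proof -
  define A where "A = eventual_lower_bounds f s"
  have "definable 1 (\<lambda>w. w ! 0 \<in> A)"
    unfolding A_def by (rule definable_eventual_lower_bounds[OF graph])
  moreover have "L \<in> A"
    unfolding A_def using \<open>0 < s\<close> by (rule mem_eventual_lower_bounds_of_lower_bound) (use bounded in simp)
  moreover have "c \<le> U" if "c \<in> A" for c
  proof (rule eventual_lower_bound_le[OF dense \<open>0 < s\<close>])
    show "f t < U" if "0 < t" "t < s" for t using bounded[OF that] by simp
    show "c \<in> eventual_lower_bounds f s" using that unfolding A_def .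
  qed
  ultimately have "\<exists>l. (\<forall>x\<in>A. x \<le> l) \<and> (\<forall>c. (\<forall>x\<in>A. x \<le> c) \<longrightarrow> l \<le> c)"
    by (rule definable_least_upper_bound)
  then obtain l where upper: "\<And>c. c \<in> A \<Longrightarrow> c \<le> l" and least: "\<And>c. (\<forall>x\<in>A. x \<le> c) \<Longrightarrow> l \<le> c"
    by blast
  \<comment> \<open>\<open>l\<close> is the lim inf of \<open>f\<close> at \<open>0\<close>; near \<open>0\<close>, \<open>f\<close> stays within \<open>d\<close> of it.\<close>
  obtain d where "0 < d" "d + d \<le> \<epsilon>" using exists_double_le[OF dense \<open>0 < \<epsilon>\<close>] .
  obtain c where "c \<in> A" "l - d < c" using lub_approx[OF least \<open>0 < d\<close>] .
  then obtain e1 where "0 < e1" and e1: "\<And>t. 0 < t \<Longrightarrow> t < e1 \<Longrightarrow> t < s \<Longrightarrow> c < f t"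
    unfolding A_def eventual_lower_bounds_def by blast
  have above: "l - d < f t" if "0 < t" "t < e1" "t < s" for t
    using \<open>l - d < c\<close> e1[OF that] by (rule order_less_trans)
  have "l + d \<notin> A" using upper[of "l + d"] \<open>0 < d\<close> by auto
  then obtain e2 where "0 < e2" and below: "\<And>t. 0 < t \<Longrightarrow> t < e2 \<Longrightarrow> t < s \<Longrightarrow> f t \<le> l + d"
    using eventually_le_of_not_eventual_lower_bound[OF graph] unfolding A_def by blast
  show thesis
  proof (rule that[of "min s (min e1 e2)"])
    show "0 < min s (min e1 e2)" using \<open>0 < s\<close> \<open>0 < e1\<close> \<open>0 < e2\<close> by simp
  next
    fix t t' assume "0 < t" "t < min s (min e1 e2)" "0 < t'" "t' < min s (min e1 e2)"
    then have "f t \<le> l + d" and "l - d < f t'"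
      using above[of t'] below[of t] by simp_all
    then show "f t - f t' < \<epsilon>"
      using \<open>d + d \<le> \<epsilon>\<close> by (rule diff_less_of_mem_interval)
  qed simp
qed

end

theorem mainTheorem9:
  fixes S :: "nat \<Rightarrow> ('a::{linordered_ab_group_add,abs_if}) list set set"
    and C :: "'a list set" and n :: nat and s :: 'a
    and F :: "'a list \<Rightarrow> 'a \<Rightarrow> 'a"
  assumes "definable_structure S"
    and "definably_complete S"
    and "locally_o_minimal S"
    and "C \<in> S n"
    and "0 < s"
    and "{xs @ [t, F xs t] | xs t. xs \<in> C \<and> 0 < t \<and> t < s} \<in> S (n + 2)"
    and "\<forall>x\<in>C. \<exists>N>0. \<forall>t. 0 < t \<and> t < s \<longrightarrow> \<bar>F x t\<bar> < N"
  shows "\<forall>\<epsilon>>0. \<forall>x\<in>C. \<exists>s'>0. s' \<le> s \<and>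
           (\<forall>t t'. 0 < t \<and> t < s' \<and> 0 < t' \<and> t' < s' \<longrightarrow> \<bar>F x t - F x t'\<bar> < \<epsilon>)"
proof (intro allI impI ballI)
  fix \<epsilon> :: 'a and x assume "0 < \<epsilon>" and "x \<in> C"
  show "\<exists>s'>0. s' \<le> s \<and> (\<forall>t t'. 0 < t \<and> t < s' \<and> 0 < t' \<and> t' < s' \<longrightarrow> \<bar>F x t - F x t'\<bar> < \<epsilon>)"
  proof (cases "\<exists>z>0. \<forall>r. \<not> (0 < r \<and> r < (z::'a))")
    case True
    then obtain z :: 'a where "0 < z" "\<And>r. \<not> (0 < r \<and> r < z)" by blast
    then show ?thesis using \<open>0 < s\<close> by (intro exI[of _ "min s z"]) (simp, blast)
  next
    case False
    then have dense: "\<And>z::'a. 0 < z \<Longrightarrow> \<exists>r. 0 < r \<and> r < z" by blast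
    interpret definably_complete_locally_o_minimal S
      using assms(1-3) by unfold_locales
    obtain N where "\<And>t. 0 < t \<Longrightarrow> t < s \<Longrightarrow> \<bar>F x t\<bar> < N"
      using assms(7) \<open>x \<in> C\<close> by blast
    then have "\<And>t. 0 < t \<Longrightarrow> t < s \<Longrightarrow> F x t \<in> {- N<..<N}"
      by (simp add: abs_less_iff_abs_if minus_less_iff)
    then obtain s' where "0 < s'" "s' \<le> s" and
      "\<And>t t'. 0 < t \<Longrightarrow> t < s' \<Longrightarrow> 0 < t' \<Longrightarrow> t' < s' \<Longrightarrow> F x t - F x t' < \<epsilon>"
      using bounded_definable_function_Cauchy_at_0[OF definable_graph_fibre[OF assms(4,6) \<open>x \<in> C\<close>]
          dense \<open>0 < s\<close> _ \<open>0 < \<epsilon>\<close>] by metis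
    then show ?thesis
      by (intro exI[of _ s']) (auto simp: abs_less_iff_abs_if minus_diff_eq)
  qed
qed

end
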